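(* Let ${\bf v}=(v^1,\dots,v^n)$ and consider a $2+1$ dimensional system in Godunov form $$(F_{0,i})_t+(F_{1,i})_x+(F_{2,i})_y=0,\qquad i=1,\dots,n,$$ where $F_0,F_1,F_2$ are functions of ${\bf v}$ and $F_{\alpha,i}=\partial F_\alpha/\partial v^i$. Let $l^1,\dots,l^n,l$ be (inhomogeneous) linear forms in ${\bf v}$ whose $(n+1)\times(n+1)$ coefficient matrix is nondegenerate, and define $$\tilde v^i=\frac{l^i({\bf v})}{l({\bf v})},\qquad \tilde F_\alpha=\frac{F_\alpha}{l({\bf v})},\quad \alpha=0,1,2,$$ with $\tilde F_\alpha$ regarded as functions of $\tilde{\bf v}$. Then the system is equivalent to the system of the same Godunov form $$(\tilde F_{0,i})_t+(\tilde F_{1,i})_x+(\tilde F_{2,i})_y=0,\qquad i=1,\dots,n,\qquad \tilde F_{\alpha,i}=\partial\tilde F_\alpha/\partial\tilde v^i,$$ i.e. the Godunov representation is form-invariant under this projective action of $GL_{n+1}$. *)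

theory Defs
  imports "HOL-Analysis.Analysis"
begin

definition vpd :: "(real^'n \<Rightarrow> real) \<Rightarrow> 'n \<Rightarrow> real^'n \<Rightarrow> real" where
  "vpd F i v = frechet_derivative F (at v) (axis i 1)"

text \<open>Classical solutions of the Godunov-form system
  sum over alpha of partial_alpha (F_{alpha,i}(u)) = 0, i = 1..n, on an open set of
  space-time points p = (t,x,y) :: real^3 (coordinate 1 = t, 2 = x, 3 = y).
  The index alpha :: 3 labels F_0, F_1, F_2.\<close>
definition godunov_solution ::
  "(3 \<Rightarrow> real^'n \<Rightarrow> real) \<Rightarrow> (real^3) set \<Rightarrow> (real^3 \<Rightarrow> real^'n) \<Rightarrow> bool" where
  "godunov_solution F \<Omega> u \<longleftrightarrow>
     (\<forall>p\<in>\<Omega>. \<forall>i. \<exists>d :: 3 \<Rightarrow> real.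
        (\<forall>\<alpha>. ((\<lambda>s. vpd (F \<alpha>) i (u (p + s *\<^sub>R axis \<alpha> 1))) has_real_derivative d \<alpha>) (at 0))
        \<and> (\<Sum>\<alpha>\<in>UNIV. d \<alpha>) = 0)"

definition hom :: "real^'n \<Rightarrow> real^('n option)" where
  "hom v = (\<chi> k. case k of None \<Rightarrow> 1 | Some j \<Rightarrow> v $ j)"

text \<open>The inhomogeneous linear forms with coefficient matrix M:
  lform M (Some i) = l^i, lform M None = l.\<close>
definition lform :: "real^('n option)^('n option) \<Rightarrow> 'n option \<Rightarrow> real^'n \<Rightarrow> real" where
  "lform M k v = (M *v hom v) $ k"

definition proj :: "real^('n option)^('n option) \<Rightarrow> real^'n \<Rightarrow> real^'n" where
  "proj M v = (\<chi> i. lform M (Some i) v / lform M None v)"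

end

theory Submission
  imports Defs
begin

text \<open>Write \<open>f\<^sup>\<sharp>(V) = V\<^sub>0 f(V'/V\<^sub>0)\<close> for the degree-one homogeneous extension of a
  function \<open>f\<close> of \<open>v\<close> to homogeneous coordinates \<open>V = (V\<^sub>0, V')\<close>. The hypothesis says
  \<open>F\<^sub>\<alpha>\<^sup>\<sharp>(V) = G\<^sub>\<alpha>\<^sup>\<sharp>(M V)\<close>, so by the chain rule the gradients satisfy
  \<open>\<nabla>F\<^sub>\<alpha>\<^sup>\<sharp> = M\<^sup>T \<nabla>G\<^sub>\<alpha>\<^sup>\<sharp>\<close>. At \<open>V = (1, v)\<close> the gradient \<open>\<nabla>F\<^sub>\<alpha>\<^sup>\<sharp>\<close> has the components
  \<open>F\<^sub>\<alpha>,\<^sub>i\<close> together with \<open>F\<^sub>\<alpha> - \<Sum> v\<^sup>j F\<^sub>\<alpha>,\<^sub>j\<close>, and the latter is a conservation law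
  as well, being minus the combination \<open>\<Sum> v\<^sup>j (\<dots>)\<^sub>j\<close> of the equations of the system.
  Hence both systems say that the \<open>n + 1\<close> components of \<open>\<nabla>F\<^sub>\<alpha>\<^sup>\<sharp>\<close>, respectively
  \<open>\<nabla>G\<^sub>\<alpha>\<^sup>\<sharp>\<close>, are conserved, and these two vectors differ by the invertible matrix \<open>M\<^sup>T\<close>.\<close>

definition divergence_free :: "(3 \<Rightarrow> real^3 \<Rightarrow> real) \<Rightarrow> (real^3) set \<Rightarrow> bool" where
  "divergence_free \<Phi> \<Omega> \<longleftrightarrow>
     (\<forall>p\<in>\<Omega>. \<exists>d :: 3 \<Rightarrow> real.
        (\<forall>\<alpha>. ((\<lambda>s. \<Phi> \<alpha> (p + s *\<^sub>R axis \<alpha> 1)) has_real_derivative d \<alpha>) (at 0))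
        \<and> (\<Sum>\<alpha>\<in>UNIV. d \<alpha>) = 0)"

lemma godunov_solution_iff_divergence_free:
  "godunov_solution F \<Omega> u \<longleftrightarrow> (\<forall>i. divergence_free (\<lambda>\<alpha> q. vpd (F \<alpha>) i (u q)) \<Omega>)"
  unfolding godunov_solution_def divergence_free_def by blast

lemma eventually_nhds_line_in_open:
  fixes p :: "'a::real_normed_vector"
  assumes "open D" "p \<in> D"
  shows "eventually (\<lambda>s. p + s *\<^sub>R e \<in> D) (nhds 0)"
proof -
  have "isCont (\<lambda>s. p + s *\<^sub>R e) 0"
    by (intro continuous_intros)
  then show ?thesis
    using assms topological_tendstoD[of "\<lambda>s. p + s *\<^sub>R e" p "at 0" D]
    by (auto simp: eventually_nhds_conv_at isCont_def)
qed

lemma divergence_free_cong: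
  assumes "open \<Omega>" and eq: "\<forall>\<alpha>. \<forall>q\<in>\<Omega>. \<Phi> \<alpha> q = \<Psi> \<alpha> q"
  shows "divergence_free \<Phi> \<Omega> \<longleftrightarrow> divergence_free \<Psi> \<Omega>"
proof -
  have "((\<lambda>s. \<Phi> \<alpha> (p + s *\<^sub>R axis \<alpha> 1)) has_real_derivative d) (at 0) \<longleftrightarrow>
        ((\<lambda>s. \<Psi> \<alpha> (p + s *\<^sub>R axis \<alpha> 1)) has_real_derivative d) (at 0)" if "p \<in> \<Omega>" for p \<alpha> d
  proof (rule DERIV_cong_ev)
    have "eventually (\<lambda>s. p + s *\<^sub>R axis \<alpha> 1 \<in> \<Omega>) (nhds 0)"
      using assms(1) that by (rule eventually_nhds_line_in_open)
    then show "eventually (\<lambda>s. \<Phi> \<alpha> (p + s *\<^sub>R axis \<alpha> 1) = \<Psi> \<alpha> (p + s *\<^sub>R axis \<alpha> 1)) (nhds 0)"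
      by eventually_elim (use eq in blast)
  qed simp_all
  then show ?thesis
    unfolding divergence_free_def by auto
qed

lemma divergence_free_matrix_vector_mult:
  fixes X :: "3 \<Rightarrow> real^3 \<Rightarrow> real^'k::finite" and A :: "real^'k^'m"
  assumes "\<forall>k. divergence_free (\<lambda>\<alpha> q. X \<alpha> q $ k) \<Omega>"
  shows "divergence_free (\<lambda>\<alpha> q. (A *v X \<alpha> q) $ i) \<Omega>"
  unfolding divergence_free_def
proof
  fix p assume "p \<in> \<Omega>"
  then have "\<forall>k. \<exists>d :: 3 \<Rightarrow> real.
      (\<forall>\<alpha>. ((\<lambda>s. X \<alpha> (p + s *\<^sub>R axis \<alpha> 1) $ k) has_real_derivative d \<alpha>) (at 0))
      \<and> (\<Sum>\<alpha>\<in>UNIV. d \<alpha>) = 0"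
    using assms unfolding divergence_free_def by blast
  then obtain d where d: "\<And>k \<alpha>. ((\<lambda>s. X \<alpha> (p + s *\<^sub>R axis \<alpha> 1) $ k) has_real_derivative d k \<alpha>) (at 0)"
    and d_sum: "\<And>k. (\<Sum>\<alpha>\<in>UNIV. d k \<alpha>) = 0"
    by metis
  show "\<exists>e :: 3 \<Rightarrow> real.
      (\<forall>\<alpha>. ((\<lambda>s. (A *v X \<alpha> (p + s *\<^sub>R axis \<alpha> 1)) $ i) has_real_derivative e \<alpha>) (at 0))
      \<and> (\<Sum>\<alpha>\<in>UNIV. e \<alpha>) = 0"
  proof (intro exI conjI allI)
    show "((\<lambda>s. (A *v X \<alpha> (p + s *\<^sub>R axis \<alpha> 1)) $ i) has_real_derivative
        (\<Sum>k\<in>UNIV. A$i$k * d k \<alpha>)) (at 0)" for \<alpha>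
      unfolding matrix_vector_mult_def by (auto intro!: DERIV_sum DERIV_cmult d)
    show "(\<Sum>\<alpha>\<in>UNIV. \<Sum>k\<in>UNIV. A$i$k * d k \<alpha>) = 0"
      by (subst sum.swap) (simp add: d_sum flip: sum_distrib_left)
  qed
qed

lemma divergence_free_matrix_vector_mult_iff:
  fixes X :: "3 \<Rightarrow> real^3 \<Rightarrow> real^'k::finite" and A :: "real^'k^'k"
  assumes "invertible A"
  shows "(\<forall>i. divergence_free (\<lambda>\<alpha> q. (A *v X \<alpha> q) $ i) \<Omega>) \<longleftrightarrow>
         (\<forall>k. divergence_free (\<lambda>\<alpha> q. X \<alpha> q $ k) \<Omega>)"
proof
  obtain B where BA: "B ** A = mat 1"
    using assms invertible_def by blast
  assume "\<forall>i. divergence_free (\<lambda>\<alpha> q. (A *v X \<alpha> q) $ i) \<Omega>"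
  then have "divergence_free (\<lambda>\<alpha> q. (B *v (A *v X \<alpha> q)) $ k) \<Omega>" for k
    by (rule divergence_free_matrix_vector_mult)
  then show "\<forall>k. divergence_free (\<lambda>\<alpha> q. X \<alpha> q $ k) \<Omega>"
    by (simp add: matrix_vector_mul_assoc BA)
qed (use divergence_free_matrix_vector_mult in blast)

lemma frechet_derivative_eq_sum_vpd:
  assumes "f differentiable (at v)"
  shows "frechet_derivative f (at v) x = (\<Sum>j\<in>UNIV. x$j * vpd f j v)"
proof -
  have L: "linear (frechet_derivative f (at v))"
    using assms frechet_derivative_works has_derivative_linear by blast
  have "frechet_derivative f (at v) x = frechet_derivative f (at v) (\<Sum>j\<in>UNIV. x$j *\<^sub>R axis j 1)"
    using basis_expansion[of x] by (simp add: scalar_mult_eq_scaleR)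
  also have "\<dots> = (\<Sum>j\<in>UNIV. x$j * vpd f j v)"
    by (simp add: linear_sum[OF L] linear_scale[OF L] vpd_def)
  finally show ?thesis .
qed

lemma vpd_chain_rule:
  assumes g: "g differentiable (at (c x))" and c: "(c has_vector_derivative w) (at x)"
  shows "((\<lambda>t. g (c t)) has_real_derivative (\<Sum>i\<in>UNIV. w$i * vpd g i (c x))) (at x)"
proof -
  let ?g' = "frechet_derivative g (at (c x))"
  have "(g has_derivative ?g') (at (c x))"
    using g frechet_derivative_works by blast
  with c have "((g \<circ> c) has_derivative (?g' \<circ> (\<lambda>t. t *\<^sub>R w))) (at x)"
    unfolding has_vector_derivative_def by (rule diff_chain_at)
  moreover have "?g' (t *\<^sub>R w) = ?g' w * t" for t
    using \<open>(g has_derivative ?g') _\<close> has_derivative_linear linear_scale by fastforce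
  ultimately have "((\<lambda>t. g (c t)) has_real_derivative ?g' w) (at x)"
    by (simp add: has_field_derivative_def o_def)
  then show ?thesis
    using frechet_derivative_eq_sum_vpd[OF g] by simp
qed

lemma has_vector_derivative_vec_nth:
  assumes "(c has_vector_derivative w) (at x)"
  shows "((\<lambda>t. c t $ j) has_real_derivative w$j) (at x)"
proof -
  have "((\<lambda>t. c t $ j) has_derivative (\<lambda>t. (t *\<^sub>R w) $ j)) (at x)"
    using bounded_linear.has_derivative[OF bounded_linear_vec_nth] assms
    unfolding has_vector_derivative_def by blast
  moreover have "(\<lambda>t. (t *\<^sub>R w) $ j) = (*) (w$j)"
    by (auto simp: mult.commute)
  ultimately show ?thesis
    by (simp add: has_field_derivative_def)
qed

lemma has_vector_derivative_along_line:
  assumes "u differentiable (at p)"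
  shows "((\<lambda>s. u (p + s *\<^sub>R e)) has_vector_derivative frechet_derivative u (at p) e) (at 0)"
proof -
  let ?u' = "frechet_derivative u (at p)"
  have "(u has_derivative ?u') (at (p + 0 *\<^sub>R e))"
    using assms by (simp add: frechet_derivative_works)
  moreover have "((\<lambda>s. p + s *\<^sub>R e) has_derivative (\<lambda>s. s *\<^sub>R e)) (at 0)"
    by (auto intro!: derivative_eq_intros)
  ultimately have "((\<lambda>s. u (p + s *\<^sub>R e)) has_derivative (\<lambda>s. ?u' (s *\<^sub>R e))) (at 0)"
    using diff_chain_at[unfolded o_def] by blast
  moreover have "?u' (s *\<^sub>R e) = s *\<^sub>R ?u' e" for s
    using \<open>(u has_derivative ?u') _\<close> has_derivative_linear linear_scale by blast
  ultimately show ?thesis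
    by (simp add: has_vector_derivative_def)
qed

lemma lform_eq_sum: "lform M k v = (\<Sum>j\<in>UNIV. M$k$Some j * v$j) + M$k$None"
  unfolding lform_def matrix_vector_mult_def hom_def
  by (simp add: UNIV_option_conv sum.reindex)

lemma lform_has_derivative:
  "(lform M k has_derivative (\<lambda>h. \<Sum>j\<in>UNIV. M$k$Some j * h$j)) (at v)"
  unfolding lform_eq_sum[abs_def]
  by (auto intro!: derivative_eq_intros bounded_linear_imp_has_derivative)

lemma lform_add_axis: "lform M k (v + t *\<^sub>R axis j 1) = lform M k v + t * M$k$Some j"
proof -
  have "M$k$Some i * (v + t *\<^sub>R axis j 1)$i = M$k$Some i * v$i + (if i = j then t * M$k$Some j else 0)" for i
    by (simp add: axis_def algebra_simps)
  then show ?thesis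
    unfolding lform_eq_sum by (simp add: sum.distrib)
qed

lemma proj_differentiable:
  assumes "lform M None v \<noteq> 0"
  shows "proj M differentiable (at v)"
proof -
  have proj_eq: "proj M = (\<lambda>v. inverse (lform M None v) *\<^sub>R ((\<chi> i j. M$Some i$Some j) *v v + (\<chi> i. M$Some i$None)))"
    by (simp add: fun_eq_iff vec_eq_iff proj_def lform_eq_sum matrix_vector_mult_def divide_inverse mult.commute)
  show ?thesis
    unfolding proj_eq
    using has_derivative_scaleR[OF Deriv.has_derivative_inverse[OF assms lform_has_derivative]
       has_derivative_add[OF bounded_linear_imp_has_derivative[OF matrix_vector_mul_bounded_linear] has_derivative_const]]
    by (auto simp: differentiable_def)
qed

lemma proj_proj_inverse:
  assumes NM: "N ** M = mat 1" and l: "lform M None v \<noteq> 0"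
  shows "lform N None (proj M v) = inverse (lform M None v)" "proj N (proj M v) = v"
proof -
  have "hom (proj M v) = inverse (lform M None v) *\<^sub>R (M *v hom v)"
    using l by (auto simp: vec_eq_iff hom_def proj_def lform_def divide_inverse mult.commute split: option.splits)
  then have "N *v hom (proj M v) = inverse (lform M None v) *\<^sub>R hom v"
    by (simp add: matrix_vector_mul_assoc NM vector_scalar_commute flip: scalar_mult_eq_scaleR)
  then have "lform N k (proj M v) = inverse (lform M None v) * hom v $ k" for k
    unfolding lform_def by simp
  then show "lform N None (proj M v) = inverse (lform M None v)" "proj N (proj M v) = v"
    using l by (simp_all add: proj_def hom_def vec_eq_iff)
qed

lemma proj_add_axis:
  assumes "lform M None v \<noteq> 0" and "lform M None (v + t *\<^sub>R axis j 1) \<noteq> 0"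
  shows "proj M (v + t *\<^sub>R axis j 1) = proj M v +
    (t / lform M None (v + t *\<^sub>R axis j 1)) *\<^sub>R (\<chi> i. M$Some i$Some j - M$None$Some j * proj M v $ i)"
proof -
  have "(L + t * b) / (l + t * a) = L / l + t / (l + t * a) * (b - a * (L / l))"
    if "l \<noteq> 0" "l + t * a \<noteq> 0" for L l a b :: real
    using that by (simp add: divide_simps) (simp add: algebra_simps)
  with assms show ?thesis
    by (simp add: vec_eq_iff proj_def lform_add_axis)
qed

text \<open>The gradient of \<open>f\<^sup>\<sharp>\<close> at \<open>hom v = (1, v)\<close>.\<close>

definition hom_grad :: "(real^'n::finite \<Rightarrow> real) \<Rightarrow> real^'n \<Rightarrow> real^('n option)" where
  "hom_grad f v =
     (\<chi> k. case k of None \<Rightarrow> f v - (\<Sum>j\<in>UNIV. v$j * vpd f j v) | Some j \<Rightarrow> vpd f j v)"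

lemma vpd_lform_mult_comp_proj:
  assumes D: "open D" and l: "\<forall>v\<in>D. lform M None v \<noteq> 0"
    and fg: "\<forall>v\<in>D. f v = lform M None v * g (proj M v)" and v: "v \<in> D"
    and f: "f differentiable (at v)" and g: "g differentiable (at (proj M v))"
  shows "vpd f j v = M$None$Some j * hom_grad g (proj M v) $ None
     + (\<Sum>i\<in>UNIV. M$Some i$Some j * vpd g i (proj M v))"
proof -
  define l a w where "l = lform M None v" and "a = M$None$Some j"
    and "w = (\<chi> i. M$Some i$Some j - M$None$Some j * proj M v $ i)"
  define \<phi> where "\<phi> = (\<lambda>t. t / (l + t * a))"
  define c where "c = (\<lambda>t. proj M v + \<phi> t *\<^sub>R w)"
  txt \<open>By \<open>proj_add_axis\<close>, \<open>c\<close> traces the image under \<open>proj M\<close> of the coordinate line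
    \<open>v + t e\<^sub>j\<close>, so we may differentiate \<open>f (v + t e\<^sub>j) = (l + t a) g (c t)\<close> at \<open>t = 0\<close>.\<close>
  have "l \<noteq> 0"
    using l v l_def by auto
  have "(\<phi> has_real_derivative 1 / l) (at 0)"
    unfolding \<phi>_def using \<open>l \<noteq> 0\<close> by (auto intro!: derivative_eq_intros)
  then have "(c has_vector_derivative (1 / l) *\<^sub>R w) (at 0)"
    unfolding c_def by (auto intro!: derivative_eq_intros)
  moreover have "c 0 = proj M v"
    by (simp add: c_def \<phi>_def)
  ultimately have "((\<lambda>t. g (c t)) has_real_derivative
      (\<Sum>i\<in>UNIV. ((1 / l) *\<^sub>R w)$i * vpd g i (proj M v))) (at 0)"
    using vpd_chain_rule g by metis
  then have "((\<lambda>t. g (c t)) has_real_derivative (\<Sum>i\<in>UNIV. w$i * vpd g i (proj M v)) / l) (at 0)"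
    by (simp add: sum_divide_distrib)
  then have prod: "((\<lambda>t. (l + t * a) * g (c t)) has_real_derivative
      a * g (proj M v) + (\<Sum>i\<in>UNIV. w$i * vpd g i (proj M v))) (at 0)"
    using \<open>l \<noteq> 0\<close> by (auto intro!: derivative_eq_intros simp: c_def \<phi>_def)
  have ev: "eventually (\<lambda>t. f (v + t *\<^sub>R axis j 1) = (l + t * a) * g (c t)) (nhds 0)"
  proof -
    have "eventually (\<lambda>t. v + t *\<^sub>R axis j 1 \<in> D) (nhds 0)"
      using D v by (rule eventually_nhds_line_in_open)
    then show ?thesis
    proof eventually_elim
      case (elim t)
      then have "lform M None (v + t *\<^sub>R axis j 1) \<noteq> 0"
        using l by blast
      then show ?case
        using fg elim proj_add_axis[of M v t j] \<open>l \<noteq> 0\<close>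
        by (simp add: lform_add_axis c_def \<phi>_def l_def a_def w_def)
    qed
  qed
  have "((\<lambda>t. f (v + t *\<^sub>R axis j 1)) has_real_derivative vpd f j v) (at 0)"
    using has_vector_derivative_along_line[OF f]
    by (simp add: vpd_def has_real_derivative_iff_has_vector_derivative)
  then have "vpd f j v = a * g (proj M v) + (\<Sum>i\<in>UNIV. w$i * vpd g i (proj M v))"
    using DERIV_cong_ev[OF refl ev refl] prod by (blast intro: DERIV_unique)
  then show ?thesis
    by (simp add: hom_grad_def w_def a_def algebra_simps sum_subtractf sum_distrib_left)
qed

lemma transpose_matrix_vector_mult_option:
  "(transpose M *v x) $ k = M$None$k * x$None + (\<Sum>i\<in>UNIV. M$Some i$k * x$Some i)"
  by (simp add: matrix_vector_mult_def transpose_def UNIV_option_conv sum.reindex)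

lemma hom_grad_lform_mult_comp_proj:
  assumes D: "open D" and l: "\<forall>v\<in>D. lform M None v \<noteq> 0"
    and fg: "\<forall>v\<in>D. f v = lform M None v * g (proj M v)" and v: "v \<in> D"
    and f: "f differentiable (at v)" and g: "g differentiable (at (proj M v))"
  shows "hom_grad f v = transpose M *v hom_grad g (proj M v)"
proof -
  define w where "w = proj M v"
  define H where "H = hom_grad g w $ None"
  define Gi where "Gi i = vpd g i w" for i
  have H_eq: "H = g w - (\<Sum>i\<in>UNIV. w $ i * Gi i)"
    by (simp add: H_def Gi_def hom_grad_def)
  have vpd_f: "vpd f j v = M$None$Some j * H + (\<Sum>i\<in>UNIV. M$Some i$Some j * Gi i)" for j
    using vpd_lform_mult_comp_proj[OF D l fg v f g] by (simp add: H_def Gi_def w_def mult.commute)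
  have lw: "lform M None v * w $ i = lform M (Some i) v" for i
    using l v by (simp add: w_def proj_def)
  have "(\<Sum>j\<in>UNIV. v$j * vpd f j v) = (\<Sum>j\<in>UNIV. H * (M$None$Some j * v$j)
      + (\<Sum>i\<in>UNIV. Gi i * (M$Some i$Some j * v$j)))"
    by (simp add: vpd_f distrib_left sum_distrib_left mult_ac)
  also have "\<dots> = H * (\<Sum>j\<in>UNIV. M$None$Some j * v$j) + (\<Sum>i\<in>UNIV. Gi i * (\<Sum>j\<in>UNIV. M$Some i$Some j * v$j))"
    by (simp add: sum.distrib sum_distrib_left) (rule sum.swap)
  also have "\<dots> = H * (lform M None v - M$None$None) + (\<Sum>i\<in>UNIV. Gi i * (lform M (Some i) v - M$Some i$None))"
    by (simp add: lform_eq_sum)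
  finally have "f v - (\<Sum>j\<in>UNIV. v$j * vpd f j v) = M$None$None * H + (\<Sum>i\<in>UNIV. M$Some i$None * Gi i)"
    using fg v
    by (simp add: H_eq algebra_simps sum_distrib_left sum_subtractf lw[symmetric] flip: w_def)
  then have "hom_grad f v $ None = (transpose M *v hom_grad g w) $ None"
    unfolding transpose_matrix_vector_mult_option by (simp add: hom_grad_def H_def Gi_def mult.commute)
  moreover have "hom_grad f v $ Some j = (transpose M *v hom_grad g w) $ Some j" for j
    unfolding transpose_matrix_vector_mult_option by (simp add: vpd_f hom_grad_def H_def Gi_def mult.commute)
  ultimately show ?thesis
    unfolding w_def vec_eq_iff by (metis option.exhaust)
qed

lemma divergence_free_hom_grad_None:
  assumes u: "\<forall>p\<in>\<Omega>. u differentiable (at p)"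
    and F: "\<forall>\<alpha>. \<forall>p\<in>\<Omega>. F \<alpha> differentiable (at (u p))"
    and sol: "godunov_solution F \<Omega> u"
  shows "divergence_free (\<lambda>\<alpha> q. hom_grad (F \<alpha>) (u q) $ None) \<Omega>"
  unfolding divergence_free_def
proof
  fix p assume p: "p \<in> \<Omega>"
  define \<gamma> where "\<gamma> \<alpha> s = u (p + s *\<^sub>R axis \<alpha> 1)" for \<alpha> s
  define w where "w \<alpha> = frechet_derivative u (at p) (axis \<alpha> 1)" for \<alpha>
  have "\<forall>j. \<exists>d :: 3 \<Rightarrow> real. (\<forall>\<alpha>. ((\<lambda>s. vpd (F \<alpha>) j (\<gamma> \<alpha> s)) has_real_derivative d \<alpha>) (at 0))
      \<and> (\<Sum>\<alpha>\<in>UNIV. d \<alpha>) = 0"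
    using sol p unfolding godunov_solution_def \<gamma>_def by blast
  then obtain d where d: "\<And>j \<alpha>. ((\<lambda>s. vpd (F \<alpha>) j (\<gamma> \<alpha> s)) has_real_derivative d j \<alpha>) (at 0)"
    and d_sum: "\<And>j. (\<Sum>\<alpha>\<in>UNIV. d j \<alpha>) = 0"
    by metis
  have \<gamma>: "(\<gamma> \<alpha> has_vector_derivative w \<alpha>) (at 0)" "\<gamma> \<alpha> 0 = u p" for \<alpha>
    unfolding \<gamma>_def w_def using has_vector_derivative_along_line u p by auto
  show "\<exists>e :: 3 \<Rightarrow> real.
      (\<forall>\<alpha>. ((\<lambda>s. hom_grad (F \<alpha>) (u (p + s *\<^sub>R axis \<alpha> 1)) $ None) has_real_derivative e \<alpha>) (at 0))
      \<and> (\<Sum>\<alpha>\<in>UNIV. e \<alpha>) = 0"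
  proof (intro exI conjI allI)
    fix \<alpha>
    have "((\<lambda>s. F \<alpha> (\<gamma> \<alpha> s)) has_real_derivative (\<Sum>j\<in>UNIV. w \<alpha> $ j * vpd (F \<alpha>) j (u p))) (at 0)"
      using vpd_chain_rule[OF _ \<gamma>(1)] F p \<gamma>(2) by metis
    moreover have "((\<lambda>s. \<gamma> \<alpha> s $ j * vpd (F \<alpha>) j (\<gamma> \<alpha> s)) has_real_derivative
        w \<alpha> $ j * vpd (F \<alpha>) j (u p) + u p $ j * d j \<alpha>) (at 0)" for j
      using DERIV_mult[OF has_vector_derivative_vec_nth[OF \<gamma>(1)] d] by (simp add: \<gamma>(2) mult.commute)
    ultimately have "((\<lambda>s. hom_grad (F \<alpha>) (\<gamma> \<alpha> s) $ None) has_real_derivative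
        (\<Sum>j\<in>UNIV. w \<alpha> $ j * vpd (F \<alpha>) j (u p)) -
        (\<Sum>j\<in>UNIV. w \<alpha> $ j * vpd (F \<alpha>) j (u p) + u p $ j * d j \<alpha>)) (at 0)"
      unfolding hom_grad_def by (auto intro!: DERIV_diff DERIV_sum)
    then show "((\<lambda>s. hom_grad (F \<alpha>) (u (p + s *\<^sub>R axis \<alpha> 1)) $ None) has_real_derivative
        - (\<Sum>j\<in>UNIV. u p $ j * d j \<alpha>)) (at 0)"
      by (simp add: \<gamma>_def sum.distrib)
  next
    show "(\<Sum>\<alpha>\<in>UNIV. - (\<Sum>j\<in>UNIV. u p $ j * d j \<alpha>)) = 0"
    proof -
      have "(\<Sum>\<alpha>\<in>UNIV. \<Sum>j\<in>UNIV. u p $ j * d j \<alpha>) = (\<Sum>j\<in>UNIV. u p $ j * (\<Sum>\<alpha>\<in>UNIV. d j \<alpha>))"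
        by (subst sum.swap) (simp add: sum_distrib_left)
      then show ?thesis
        by (simp add: sum_negf d_sum)
    qed
  qed
qed

lemma godunov_solution_iff_hom_grad:
  assumes "\<forall>p\<in>\<Omega>. u differentiable (at p)"
    and "\<forall>\<alpha>. \<forall>p\<in>\<Omega>. F \<alpha> differentiable (at (u p))"
  shows "godunov_solution F \<Omega> u \<longleftrightarrow> (\<forall>k. divergence_free (\<lambda>\<alpha> q. hom_grad (F \<alpha>) (u q) $ k) \<Omega>)"
proof
  assume sol: "godunov_solution F \<Omega> u"
  show "\<forall>k. divergence_free (\<lambda>\<alpha> q. hom_grad (F \<alpha>) (u q) $ k) \<Omega>"
  proof
    fix k show "divergence_free (\<lambda>\<alpha> q. hom_grad (F \<alpha>) (u q) $ k) \<Omega>"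
      using sol divergence_free_hom_grad_None[OF assms sol]
      by (cases k) (simp_all add: hom_grad_def godunov_solution_iff_divergence_free)
  qed
next
  assume "\<forall>k. divergence_free (\<lambda>\<alpha> q. hom_grad (F \<alpha>) (u q) $ k) \<Omega>"
  then have "divergence_free (\<lambda>\<alpha> q. hom_grad (F \<alpha>) (u q) $ Some i) \<Omega>" for i
    by blast
  then show "godunov_solution F \<Omega> u"
    by (simp add: hom_grad_def godunov_solution_iff_divergence_free)
qed

lemma proj_image_differentiable:
  fixes M :: "real^('n::finite option)^('n option)"
  assumes M: "invertible M" and D: "open D" and l: "\<forall>v\<in>D. lform M None v \<noteq> 0"
    and F: "\<forall>v\<in>D. F differentiable (at v)"
    and G: "\<forall>v\<in>D. G (proj M v) = F v / lform M None v"
    and v: "v \<in> D"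
  shows "G differentiable (at (proj M v))"
proof -
  obtain N where MN: "M ** N = mat 1" and NM: "N ** M = mat 1"
    using M invertible_def by blast
  define E where "E = {w. lform N None w \<noteq> 0} \<inter> proj N -` D"
  have open_dom: "open {w. lform N None w \<noteq> 0}"
    unfolding lform_eq_sum by (intro open_Collect_neq continuous_intros)
  have "continuous_on {w. lform N None w \<noteq> 0} (proj N)"
    by (rule continuous_at_imp_continuous_on)
      (use proj_differentiable differentiable_imp_continuous_within in blast)
  then have "open E"
    unfolding E_def using open_dom D by (rule continuous_open_preimage)
  have "proj M v \<in> E"
    using proj_proj_inverse[OF NM] l v unfolding E_def by auto
  have G_eq: "G w = lform N None w * F (proj N w)" if "w \<in> E" for w
  proof -
    have "proj N w \<in> D" and l_N: "lform N None w \<noteq> 0"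
      using that by (auto simp: E_def)
    then have "G w = F (proj N w) / lform M None (proj N w)"
      using G proj_proj_inverse(2)[OF MN l_N] by metis
    then show ?thesis
      using proj_proj_inverse(1)[OF MN l_N] by (simp add: divide_inverse mult.commute)
  qed
  have l_N: "lform N None (proj M v) \<noteq> 0" and "proj N (proj M v) \<in> D"
    using \<open>proj M v \<in> E\<close> by (auto simp: E_def)
  then have "(F \<circ> proj N) differentiable (at (proj M v))"
    using differentiable_chain_at[OF proj_differentiable[OF l_N]] F by blast
  then have "(\<lambda>w. lform N None w * F (proj N w)) differentiable (at (proj M v))"
    using lform_has_derivative by (intro differentiable_mult) (auto simp: differentiable_def o_def)
  then obtain G' where "((\<lambda>w. lform N None w * F (proj N w)) has_derivative G') (at (proj M v))"
    by (auto simp: differentiable_def)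
  then have "(G has_derivative G') (at (proj M v))"
    by (rule has_derivative_transform_within_open[OF _ \<open>open E\<close> \<open>proj M v \<in> E\<close>]) (simp add: G_eq)
  then show ?thesis
    by (auto simp: differentiable_def)
qed

theorem proposition1:
  fixes M :: "real^('n::finite option)^('n option)"
    and F G :: "3 \<Rightarrow> real^'n \<Rightarrow> real"
    and D :: "(real^'n) set"
    and \<Omega> :: "(real^3) set"
    and u :: "real^3 \<Rightarrow> real^'n"
  assumes nondeg: "det M \<noteq> 0"
    and D_open: "open D"
    and l_nz: "\<forall>v\<in>D. lform M None v \<noteq> 0"
    and F_diff: "\<forall>\<alpha>. \<forall>v\<in>D. F \<alpha> differentiable (at v)"
    and G_def: "\<forall>\<alpha>. \<forall>v\<in>D. G \<alpha> (proj M v) = F \<alpha> v / lform M None v"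
    and \<Omega>_open: "open \<Omega>"
    and u_diff: "\<forall>p\<in>\<Omega>. u differentiable (at p)"
    and u_range: "u ` \<Omega> \<subseteq> D"
  shows "godunov_solution F \<Omega> u \<longleftrightarrow> godunov_solution G \<Omega> (proj M \<circ> u)"
proof -
  have M: "invertible M"
    using nondeg invertible_det_nz by blast
  have G_diff: "G \<alpha> differentiable (at (proj M v))" if "v \<in> D" for \<alpha> v
    using proj_image_differentiable[OF M D_open l_nz] F_diff G_def that by blast
  have F_eq: "\<forall>v\<in>D. F \<alpha> v = lform M None v * G \<alpha> (proj M v)" for \<alpha>
    using G_def l_nz by simp
  have proj_u_diff: "\<forall>p\<in>\<Omega>. (proj M \<circ> u) differentiable (at p)"
    using u_diff u_range l_nz by (auto intro!: differentiable_chain_at proj_differentiable)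
  have "godunov_solution F \<Omega> u \<longleftrightarrow> (\<forall>k. divergence_free (\<lambda>\<alpha> q. hom_grad (F \<alpha>) (u q) $ k) \<Omega>)"
    using u_diff F_diff u_range by (intro godunov_solution_iff_hom_grad) auto
  also have "\<dots> \<longleftrightarrow> (\<forall>k. divergence_free (\<lambda>\<alpha> q. (transpose M *v hom_grad (G \<alpha>) ((proj M \<circ> u) q)) $ k) \<Omega>)"
    using hom_grad_lform_mult_comp_proj[OF D_open l_nz F_eq] F_diff G_diff u_range
    by (intro iff_allI divergence_free_cong[OF \<Omega>_open]) auto
  also have "\<dots> \<longleftrightarrow> (\<forall>k. divergence_free (\<lambda>\<alpha> q. hom_grad (G \<alpha>) ((proj M \<circ> u) q) $ k) \<Omega>)"
    by (rule divergence_free_matrix_vector_mult_iff[OF transpose_invertible[OF M]])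
  also have "\<dots> \<longleftrightarrow> godunov_solution G \<Omega> (proj M \<circ> u)"
    by (rule godunov_solution_iff_hom_grad[OF proj_u_diff, symmetric]) (use G_diff u_range in auto)
  finally show ?thesis .
qed

end
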